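(* For every planar rooted forest $\tau$ (decorated or not) with vertex set $V=V(\tau)$ and all $h,k\ge0$, $$(h+k)^{|\tau|}=\sum_{\substack{V'\sqcup V''=V\\ V''\ \text{down-set for }\ll}}\frac{\tau!}{(V',\ll|_{V'})!\,(V'',\ll|_{V''})!}\,h^{|V'|}k^{|V''|},$$ where the sum runs over all partitions of $V$ into $V'$ and $V''$ such that $V''$ is downward closed for $\ll$ (if $v\in V''$ and $w\ll v$ then $w\in V''$).
   Context: Planar rooted forests: finite left-to-right ordered sequences of planar rooted trees (children of each vertex linearly ordered left to right). On the vertex set, $v<w$ iff $v\ne w$ and $v$ lies on the path from a root to $w$; $\ll$ is the transitive closure of the relation $R$: $vRw$ iff $v<w$, or $v,w$ are children of a common vertex with $v$ to the right of $w$, or $v,w$ are both roots with $v$ to the right of $w$. For a finite poset $(P,\le)$ and $s<t$, $\Omega^{st}_P=\{(t_v)_{v\in P}\in[s,t]^P:\ t_v\ge t_w\text{ whenever }v<w\}$ and the poset factorial $P!$ is defined by $\mathrm{Vol}(\Omega^{st}_P)=(t-s)^{|P|}/P!$ (empty poset: $1$). The planar factorial is $\tau!:=(V(\tau),\ll)!$; $(W,\ll|_W)!$ is the factorial of the subset $W$ with the restricted order. *)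

theory Defs
  imports "HOL-Analysis.Analysis"
begin

text \<open>Planar rooted trees, possibly decorated by labels of type 'a (use unit for
undecorated trees). Children are ordered left to right by list position.
A planar rooted forest is a list of planar rooted trees (roots ordered left to right).\<close>

datatype 'a ptree = Node 'a "'a ptree list"

text \<open>Vertices of a forest are addressed by nonempty index paths:
[i] is the i-th root, i # p is the vertex with address p inside the i-th tree's
child forest.\<close>

inductive vtx :: "'a ptree list \<Rightarrow> nat list \<Rightarrow> bool" where
  root: "i < length ts \<Longrightarrow> vtx ts [i]"
| sub: "i < length ts \<Longrightarrow> ts ! i = Node a cs \<Longrightarrow> vtx cs p \<Longrightarrow> vtx ts (i # p)"

definition verts :: "'a ptree list \<Rightarrow> nat list set" where
  "verts ts = {p. vtx ts p}"

text \<open>v < w: v is a proper ancestor of w (proper prefix of the address).\<close>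
definition anc :: "nat list \<Rightarrow> nat list \<Rightarrow> bool" where
  "anc v w \<longleftrightarrow> v \<noteq> w \<and> (\<exists>q. w = v @ q)"

text \<open>The relation R: v < w, or v, w are siblings (children of a common vertex,
or both roots) with v to the right of w.\<close>
definition relR :: "'a ptree list \<Rightarrow> nat list \<Rightarrow> nat list \<Rightarrow> bool" where
  "relR ts v w \<longleftrightarrow> v \<in> verts ts \<and> w \<in> verts ts \<and>
     (anc v w \<or> (\<exists>p i j. v = p @ [i] \<and> w = p @ [j] \<and> j < i))"

definition planar_lt :: "'a ptree list \<Rightarrow> nat list \<Rightarrow> nat list \<Rightarrow> bool" where
  "planar_lt ts = (relR ts)\<^sup>+\<^sup>+"

text \<open>Poset factorial: Vol(\<Omega>^{st}_P) = (t-s)^|P| / P!, with the volume taken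
for s = 0, t = 1 (the quantity is independent of s < t by scaling).\<close>
definition omega_poset :: "'b set \<Rightarrow> ('b \<Rightarrow> 'b \<Rightarrow> bool) \<Rightarrow> real \<Rightarrow> real \<Rightarrow> ('b \<Rightarrow> real) set" where
  "omega_poset P lt s t =
     {f \<in> P \<rightarrow>\<^sub>E {s..t}. \<forall>v\<in>P. \<forall>w\<in>P. lt v w \<longrightarrow> f w \<le> f v}"

definition poset_fact :: "'b set \<Rightarrow> ('b \<Rightarrow> 'b \<Rightarrow> bool) \<Rightarrow> real" where
  "poset_fact P lt = 1 / measure (PiM P (\<lambda>_. lborel)) (omega_poset P lt 0 1)"

definition downset :: "('b \<Rightarrow> 'b \<Rightarrow> bool) \<Rightarrow> 'b set \<Rightarrow> bool" where
  "downset lt D \<longleftrightarrow> (\<forall>v\<in>D. \<forall>w. lt w v \<longrightarrow> w \<in> D)"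

end

theory Submission
  imports Defs
begin

text \<open>Write \<open>\<Omega>\<^sub>P(S)\<close> for the points of \<open>S\<^sup>P\<close> whose coordinates decrease along the order of \<open>P\<close>.
Then \<open>P!\<close> is the inverse volume of \<open>\<Omega>\<^sub>P[0,1]\<close> and, by an affine change of variables, \<open>\<Omega>\<^sub>P[a,a+c]\<close>
has volume \<open>c^|P| / P!\<close>. A point \<open>f\<close> of \<open>\<Omega>\<^sub>V[0,h+k]\<close> determines the down-set \<open>D = {v. f v > h}\<close>,
and the points with a given \<open>D\<close> form, up to a null set, the product of \<open>\<Omega>\<^sub>V\<^sub>-\<^sub>D[0,h]\<close> and
\<open>\<Omega>\<^sub>D[h,h+k]\<close>. Comparing volumes gives \<open>(h+k)^|V| / V! = \<Sum>\<^sub>D h^|V-D| / (V-D)! \<cdot> k^|D| / D!\<close>,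
and multiplying by \<open>V!\<close> is legitimate because \<open>\<ll>\<close> is a strict partial order, so that
\<open>\<Omega>\<^sub>V[0,1]\<close> contains a small box and has positive volume.\<close>

abbreviation product_lborel :: "'b set \<Rightarrow> ('b \<Rightarrow> real) measure" where
  "product_lborel P \<equiv> PiM P (\<lambda>_. lborel)"

text \<open>\<^const>\<open>omega_poset\<close> is the case \<open>S = {s..t}\<close>; other ranges are needed for the half-open
pieces of the cut.\<close>

definition order_polytope :: "'b set \<Rightarrow> ('b \<Rightarrow> 'b \<Rightarrow> bool) \<Rightarrow> real set \<Rightarrow> ('b \<Rightarrow> real) set" where
  "order_polytope P lt S = {f \<in> P \<rightarrow>\<^sub>E S. \<forall>v\<in>P. \<forall>w\<in>P. lt v w \<longrightarrow> f w \<le> f v}"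

definition order_volume :: "'b set \<Rightarrow> ('b \<Rightarrow> 'b \<Rightarrow> bool) \<Rightarrow> real" where
  "order_volume P lt = measure (product_lborel P) (order_polytope P lt {0..1})"

lemma poset_fact_eq_inverse_order_volume: "poset_fact P lt = 1 / order_volume P lt"
  by (simp add: poset_fact_def omega_poset_def order_volume_def order_polytope_def)

lemma sets_order_polytope[measurable]:
  assumes "finite P" "S \<in> sets borel"
  shows "order_polytope P lt S \<in> sets (product_lborel P)"
proof -
  have "order_polytope P lt S =
      (P \<rightarrow>\<^sub>E S) \<inter> {f \<in> space (product_lborel P). \<forall>v\<in>P. \<forall>w\<in>P. lt v w \<longrightarrow> f w \<le> f v}"
    by (auto simp: order_polytope_def space_PiM)
  also have "\<dots> \<in> sets (product_lborel P)"
  proof (rule sets.Int)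
    show "P \<rightarrow>\<^sub>E S \<in> sets (product_lborel P)"
      using assms by (intro sets_PiM_I_finite) auto
    have "(\<lambda>f. f v) \<in> borel_measurable (product_lborel P)" if "v \<in> P" for v
      using measurable_component_singleton[OF that, of "\<lambda>_. lborel"] by simp
    then have [measurable]: "Measurable.pred (product_lborel P) (\<lambda>f. f w \<le> f v)"
      if "v \<in> P" "w \<in> P" for v w
      unfolding pred_def using that by (intro borel_measurable_le)
    have "Measurable.pred (product_lborel P) (\<lambda>f. \<forall>v\<in>P. \<forall>w\<in>P. lt v w \<longrightarrow> f w \<le> f v)"
      using assms by (intro pred_intros_finite pred_intros_logic) auto
    then show "{f \<in> space (product_lborel P). \<forall>v\<in>P. \<forall>w\<in>P. lt v w \<longrightarrow> f w \<le> f v}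
        \<in> sets (product_lborel P)"
      by (simp add: pred_def)
  qed
  finally show ?thesis .
qed

lemma order_polytope_empty: "order_polytope {} lt S = {\<lambda>_. undefined}"
  by (auto simp: order_polytope_def)

lemma order_volume_empty: "order_volume {} lt = 1"
  by (simp add: order_volume_def order_polytope_empty PiM_empty)

lemma order_volume_nonneg: "order_volume P lt \<ge> 0"
  by (simp add: order_volume_def)

lemma emeasure_order_polytope_unit:
  assumes "finite P"
  shows "emeasure (product_lborel P) (order_polytope P lt {0..1}) = ennreal (order_volume P lt)"
  unfolding order_volume_def
proof (rule emeasure_eq_ennreal_measure)
  interpret product_sigma_finite "\<lambda>_. lborel :: real measure" by standard
  have "emeasure (product_lborel P) (order_polytope P lt {0..1})
      \<le> emeasure (product_lborel P) (P \<rightarrow>\<^sub>E {0..1::real})"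
    using assms by (intro emeasure_mono) (auto simp: order_polytope_def intro!: sets_PiM_I_finite)
  also have "\<dots> = 1"
    using assms by (simp add: emeasure_PiM)
  finally show "emeasure (product_lborel P) (order_polytope P lt {0..1}) \<noteq> top"
    by (rule neq_top_trans[OF ennreal_one_neq_top])
qed

lemma emeasure_lborel_affine_vimage:
  fixes c :: real
  assumes "c > 0" "A \<in> sets borel"
  shows "emeasure lborel A = ennreal c * emeasure lborel ((\<lambda>x. a + c * x) -` A)"
proof -
  have [measurable]: "(\<lambda>x. a + c * x) -` A \<in> sets borel"
    using measurable_sets[of "\<lambda>x. a + c * x" borel borel A] assms by simp
  have "emeasure lborel A = (\<integral>\<^sup>+x. indicator A x \<partial>lborel)"
    using assms by simp
  also have "\<dots> = ennreal c * (\<integral>\<^sup>+x. indicator A (a + c * x) \<partial>lborel)"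
    using assms nn_integral_real_affine[of "indicator A" c a] by simp
  also have "(\<lambda>x. indicator A (a + c * x) :: ennreal) = indicator ((\<lambda>x. a + c * x) -` A)"
    by (auto simp: indicator_def)
  finally show ?thesis
    by simp
qed

lemma emeasure_order_polytope_affine:
  fixes c :: real and P :: "'b set"
  assumes fin: "finite P" and c: "c > 0" and S: "S \<in> sets borel"
  shows "emeasure (product_lborel P) (order_polytope P lt S) =
    ennreal c ^ card P * emeasure (product_lborel P) (order_polytope P lt ((\<lambda>x. a + c * x) -` S))"
proof -
  interpret product_sigma_finite "\<lambda>_. lborel :: real measure" by standard
  define T where "T = (\<lambda>f. \<lambda>v\<in>P. a + c * f v)"
  have T: "T \<in> measurable (product_lborel P) (product_lborel P)"
    unfolding T_def by measurable
  have vimage: "(\<lambda>x. a + c * x) -` B \<in> sets borel" if "B \<in> sets borel" for B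
    using measurable_sets[of "\<lambda>x. a + c * x" borel borel B] that by simp
  have scaled: "scale_measure (ennreal c ^ card P) (distr (product_lborel P) (product_lborel P) T)
      = product_lborel P"
  proof (rule PiM_eqI[OF fin])
    fix A :: "'b \<Rightarrow> real set" assume A: "\<And>i. i \<in> P \<Longrightarrow> A i \<in> sets lborel"
    have "T -` Pi\<^sub>E P A \<inter> space (product_lborel P) = Pi\<^sub>E P (\<lambda>v. (\<lambda>x. a + c * x) -` A v)"
      by (auto simp: T_def space_PiM PiE_def Pi_def extensional_def)
    moreover have "Pi\<^sub>E P A \<in> sets (product_lborel P)"
      using A fin by (intro sets_PiM_I_finite) auto
    ultimately have "emeasure (scale_measure (ennreal c ^ card P)
        (distr (product_lborel P) (product_lborel P) T)) (Pi\<^sub>E P A)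
       = ennreal c ^ card P * (\<Prod>v\<in>P. emeasure lborel ((\<lambda>x. a + c * x) -` A v))"
      using T A fin vimage by (simp add: emeasure_distr emeasure_PiM)
    also have "\<dots> = (\<Prod>v\<in>P. ennreal c * emeasure lborel ((\<lambda>x. a + c * x) -` A v))"
      by (simp add: prod.distrib)
    also have "\<dots> = (\<Prod>v\<in>P. emeasure lborel (A v))"
      using A c by (intro prod.cong refl emeasure_lborel_affine_vimage[symmetric]) auto
    finally show "emeasure (scale_measure (ennreal c ^ card P)
        (distr (product_lborel P) (product_lborel P) T)) (Pi\<^sub>E P A) = (\<Prod>v\<in>P. emeasure lborel (A v))" .
  qed simp
  have "T -` order_polytope P lt S \<inter> space (product_lborel P)
      = order_polytope P lt ((\<lambda>x. a + c * x) -` S)"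
    using c by (auto simp: T_def order_polytope_def space_PiM PiE_def Pi_def extensional_def)
  then show ?thesis
    using T fin S by (subst (1) scaled[symmetric]) (simp add: emeasure_distr)
qed

text \<open>The two polytopes differ only inside the finitely many hyperplanes \<open>f v = a\<close>.\<close>

lemma emeasure_order_polytope_Ioc_eq_Icc:
  assumes fin: "finite P"
  shows "emeasure (product_lborel P) (order_polytope P lt {a<..b}) =
    emeasure (product_lborel P) (order_polytope P lt {a..b})"
proof -
  interpret product_sigma_finite "\<lambda>_. lborel :: real measure" by standard
  define H where "H v = Pi\<^sub>E P (\<lambda>w. if w = v then {a} else UNIV)" for v
  have "H v \<in> null_sets (product_lborel P)" if "v \<in> P" for v
  proof -
    have "emeasure (product_lborel P) (H v) = 0"
      unfolding H_def using fin that by (subst emeasure_PiM) (auto intro!: prod_zero bexI[OF _ that])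
    moreover have "H v \<in> sets (product_lborel P)"
      unfolding H_def using fin by (intro sets_PiM_I_finite) auto
    ultimately show ?thesis
      by auto
  qed
  then have null: "(\<Union>v\<in>P. H v) \<in> null_sets (product_lborel P)"
    using fin by (intro null_sets.finite_UN) auto
  have diff: "order_polytope P lt {a..b} - order_polytope P lt {a<..b} \<subseteq> (\<Union>v\<in>P. H v)"
  proof
    fix f assume f: "f \<in> order_polytope P lt {a..b} - order_polytope P lt {a<..b}"
    then obtain v where "v \<in> P" "f v = a"
      by (force simp: order_polytope_def PiE_def Pi_def)
    with f show "f \<in> (\<Union>v\<in>P. H v)"
      by (auto simp: H_def order_polytope_def PiE_def Pi_def)
  qed
  have Ioc: "order_polytope P lt {a<..b} \<in> sets (product_lborel P)"
    and Icc: "order_polytope P lt {a..b} \<in> sets (product_lborel P)"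
    using fin by (simp_all add: sets_order_polytope)
  have "order_polytope P lt {a..b} =
      order_polytope P lt {a<..b} \<union> (order_polytope P lt {a..b} - order_polytope P lt {a<..b})"
    by (auto simp: order_polytope_def PiE_def Pi_def)
  also have "emeasure (product_lborel P) \<dots> = emeasure (product_lborel P) (order_polytope P lt {a<..b})"
    using Ioc Icc null diff by (intro emeasure_Un_null_set null_sets_subset[OF null] sets.Diff)
  finally show ?thesis ..
qed

lemma emeasure_order_polytope_Icc:
  assumes fin: "finite P" and "c \<ge> 0"
  shows "emeasure (product_lborel P) (order_polytope P lt {a..a + c}) =
    ennreal (c ^ card P * order_volume P lt)"
proof (cases "c = 0")
  case False
  then have "c > 0"
    using assms(2) by simp
  then have "(\<lambda>x. a + c * x) -` {a..a + c} = {0..1}"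
    by (auto simp: zero_le_mult_iff mult_le_cancel_left1)
  then show ?thesis
    using emeasure_order_polytope_affine[OF fin \<open>c > 0\<close>, of "{a..a + c}" lt a] fin \<open>c > 0\<close>
    by (simp add: emeasure_order_polytope_unit ennreal_mult ennreal_power order_volume_def)
next
  case True
  show ?thesis
  proof (cases "P = {}")
    case True
    then show ?thesis
      by (simp add: order_polytope_empty order_volume_empty PiM_empty)
  next
    case False
    interpret product_sigma_finite "\<lambda>_. lborel :: real measure" by standard
    have "emeasure (product_lborel P) (order_polytope P lt {a..a + c}) \<le>
        emeasure (product_lborel P) (P \<rightarrow>\<^sub>E {a})"
      using fin \<open>c = 0\<close> by (intro emeasure_mono sets_PiM_I_finite) (auto simp: order_polytope_def)
    also have "\<dots> = 0"
      using fin False by (subst emeasure_PiM) (auto intro!: prod_zero)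
    finally show ?thesis
      using False fin \<open>c = 0\<close> by (simp add: power_0_left)
  qed
qed

lemma sets_PiM_restrict_pair:
  assumes "I \<subseteq> K" "J \<subseteq> K" "A \<in> sets (PiM I M)" "B \<in> sets (PiM J M)"
  shows "{f \<in> space (PiM K M). restrict f I \<in> A \<and> restrict f J \<in> B} \<in> sets (PiM K M)"
proof -
  have "{f \<in> space (PiM K M). restrict f I \<in> A \<and> restrict f J \<in> B} =
      ((\<lambda>f. restrict f I) -` A \<inter> space (PiM K M)) \<inter> ((\<lambda>f. restrict f J) -` B \<inter> space (PiM K M))"
    by auto
  also have "\<dots> \<in> sets (PiM K M)"
    using assms by (intro sets.Int measurable_sets[OF measurable_restrict_subset]) auto
  finally show ?thesis .
qed

lemma emeasure_order_polytope_merge: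
  fixes I J :: "'b set"
  assumes disj: "I \<inter> J = {}" and fin: "finite I" "finite J"
    and S: "S \<in> sets borel" and T: "T \<in> sets borel"
  shows "emeasure (product_lborel (I \<union> J))
      {f \<in> space (product_lborel (I \<union> J)). restrict f I \<in> order_polytope I lt S \<and> restrict f J \<in> order_polytope J lt T}
    = emeasure (product_lborel I) (order_polytope I lt S) * emeasure (product_lborel J) (order_polytope J lt T)"
proof -
  interpret product_sigma_finite "\<lambda>_. lborel :: real measure" by standard
  let ?A = "{f \<in> space (product_lborel (I \<union> J)).
    restrict f I \<in> order_polytope I lt S \<and> restrict f J \<in> order_polytope J lt T}"
  have A: "?A \<in> sets (product_lborel (I \<union> J))"
    using fin S T by (intro sets_PiM_restrict_pair sets_order_polytope) auto
  have slice: "(\<lambda>y. merge I J (x, y)) -` ?A \<inter> space (product_lborel J)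
      = (if x \<in> order_polytope I lt S then order_polytope J lt T else {})"
    if x: "x \<in> space (product_lborel I)" for x
  proof -
    have "restrict (merge I J (x, y)) J = restrict y J" "restrict (merge I J (x, y)) I = x" for y
      using disj x by (auto simp: merge_def restrict_def fun_eq_iff space_PiM PiE_def extensional_def)
    moreover have "restrict y J = y" if "y \<in> space (product_lborel J)" for y
      using that by (auto simp: space_PiM PiE_def extensional_restrict)
    moreover have "merge I J (x, y) \<in> space (product_lborel (I \<union> J))"
      if "y \<in> space (product_lborel J)" for y
      using x that by (auto simp: space_PiM)
    moreover have "order_polytope J lt T \<subseteq> space (product_lborel J)"
      by (auto simp: order_polytope_def space_PiM)
    ultimately show ?thesis
      by auto
  qed
  have "emeasure (product_lborel (I \<union> J)) ?A = (\<integral>\<^sup>+x. emeasure (product_lborel J)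
      ((\<lambda>y. merge I J (x, y)) -` ?A \<inter> space (product_lborel J)) \<partial>product_lborel I)"
    using disj fin A by (rule emeasure_fold_integral)
  also have "\<dots> = (\<integral>\<^sup>+x. emeasure (product_lborel J) (order_polytope J lt T)
      * indicator (order_polytope I lt S) x \<partial>product_lborel I)"
    by (intro nn_integral_cong) (subst slice; simp add: indicator_def)
  also have "\<dots> = emeasure (product_lborel J) (order_polytope J lt T) * emeasure (product_lborel I) (order_polytope I lt S)"
    using fin S by (intro nn_integral_cmult_indicator sets_order_polytope)
  finally show ?thesis
    by (simp add: mult.commute)
qed

text \<open>\<^const>\<open>downset\<close> quantifies over the whole type, hence the hypothesis that \<open>lt\<close> does not
leave \<open>V\<close> downwards.\<close>

lemma downset_superlevel_set:
  assumes closed: "\<And>v w. lt w v \<Longrightarrow> v \<in> V \<Longrightarrow> w \<in> V" and f: "f \<in> order_polytope V lt S"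
  shows "downset lt {v \<in> V. b < f v}"
  unfolding downset_def
proof (intro ballI allI impI)
  fix v w assume v: "v \<in> {v \<in> V. b < f v}" and "lt w v"
  then have "w \<in> V"
    using closed by blast
  with v \<open>lt w v\<close> f show "w \<in> {v \<in> V. b < f v}"
    by (force simp: order_polytope_def)
qed

lemma order_polytope_cut:
  assumes D: "D \<subseteq> V" "downset lt D" and f: "f \<in> V \<rightarrow>\<^sub>E UNIV"
  shows "restrict f (V - D) \<in> order_polytope (V - D) lt (S \<inter> {..b}) \<and>
      restrict f D \<in> order_polytope D lt (S \<inter> {b<..})
    \<longleftrightarrow> f \<in> order_polytope V lt S \<and> D = {v \<in> V. b < f v}"
proof
  assume restrictions: "restrict f (V - D) \<in> order_polytope (V - D) lt (S \<inter> {..b}) \<and>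
      restrict f D \<in> order_polytope D lt (S \<inter> {b<..})"
  have low: "f v \<in> S \<and> f v \<le> b" if "v \<in> V - D" for v
    using restrictions that by (auto simp: order_polytope_def PiE_def Pi_def)
  have high: "f v \<in> S \<and> b < f v" if "v \<in> D" for v
    using restrictions that by (auto simp: order_polytope_def PiE_def Pi_def)
  have mono_low: "f w \<le> f v" if "v \<in> V - D" "w \<in> V - D" "lt v w" for v w
    using restrictions that by (auto simp: order_polytope_def)
  have mono_high: "f w \<le> f v" if "v \<in> D" "w \<in> D" "lt v w" for v w
    using restrictions that by (auto simp: order_polytope_def)
  have "f w \<le> f v" if "v \<in> V" "w \<in> V" "lt v w" for v w
  proof (cases "v \<in> D")
    case True
    then show ?thesis
      using that high[of v] low[of w] mono_high[of v w] by (cases "w \<in> D") auto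
  next
    case False
    then have "w \<notin> D"
      using D(2) that(3) by (auto simp: downset_def)
    then show ?thesis
      using False that mono_low[of v w] by auto
  qed
  moreover have "f v \<in> S" if "v \<in> V" for v
    using that low[of v] high[of v] by (cases "v \<in> D") auto
  moreover have "D = {v \<in> V. b < f v}"
    using D(1) low high by force
  ultimately show "f \<in> order_polytope V lt S \<and> D = {v \<in> V. b < f v}"
    using f by (auto simp: order_polytope_def PiE_def Pi_def)
next
  assume "f \<in> order_polytope V lt S \<and> D = {v \<in> V. b < f v}"
  then show "restrict f (V - D) \<in> order_polytope (V - D) lt (S \<inter> {..b}) \<and>
      restrict f D \<in> order_polytope D lt (S \<inter> {b<..})"
    by (auto simp: order_polytope_def PiE_def Pi_def)
qed

lemma emeasure_order_polytope_split:
  assumes fin: "finite V" and closed: "\<And>v w. lt w v \<Longrightarrow> v \<in> V \<Longrightarrow> w \<in> V"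
    and S: "S \<in> sets borel"
  shows "emeasure (product_lborel V) (order_polytope V lt S) =
    (\<Sum>D\<in>{D. D \<subseteq> V \<and> downset lt D}.
      emeasure (product_lborel (V - D)) (order_polytope (V - D) lt (S \<inter> {..b})) *
      emeasure (product_lborel D) (order_polytope D lt (S \<inter> {b<..})))"
proof -
  define Ds where "Ds = {D. D \<subseteq> V \<and> downset lt D}"
  define piece where "piece D = {f \<in> space (product_lborel V).
    restrict f (V - D) \<in> order_polytope (V - D) lt (S \<inter> {..b}) \<and>
    restrict f D \<in> order_polytope D lt (S \<inter> {b<..})}" for D
  have piece_eq: "piece D = {f \<in> order_polytope V lt S. D = {v \<in> V. b < f v}}" if "D \<in> Ds" for D
  proof (rule set_eqI)
    fix f
    have D: "D \<subseteq> V" "downset lt D"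
      using that by (auto simp: Ds_def)
    show "f \<in> piece D \<longleftrightarrow> f \<in> {f \<in> order_polytope V lt S. D = {v \<in> V. b < f v}}"
    proof (cases "f \<in> V \<rightarrow>\<^sub>E UNIV")
      case True
      then show ?thesis
        using order_polytope_cut[OF D True, of S b] by (simp add: piece_def space_PiM)
    next
      case False
      then show ?thesis
        by (auto simp: piece_def space_PiM order_polytope_def)
    qed
  qed
  have "order_polytope V lt S = (\<Union>D\<in>Ds. piece D)"
  proof (intro equalityI subsetI)
    fix f assume f: "f \<in> order_polytope V lt S"
    then have "{v \<in> V. b < f v} \<in> Ds"
      using downset_superlevel_set[OF closed f] by (auto simp: Ds_def)
    with f piece_eq show "f \<in> (\<Union>D\<in>Ds. piece D)"
      by blast
  qed (use piece_eq in blast)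
  moreover have "disjoint_family_on piece Ds"
    using piece_eq by (auto simp: disjoint_family_on_def)
  moreover have "finite Ds"
    using fin by (auto simp: Ds_def)
  moreover have "piece D \<in> sets (product_lborel V)" if "D \<in> Ds" for D
    unfolding piece_def using that fin by (intro sets_PiM_restrict_pair sets_order_polytope)
      (auto simp: Ds_def intro: finite_subset S)
  ultimately have "emeasure (product_lborel V) (order_polytope V lt S) =
      (\<Sum>D\<in>Ds. emeasure (product_lborel V) (piece D))"
    by (metis image_subsetI sum_emeasure)
  also have "\<dots> = (\<Sum>D\<in>Ds. emeasure (product_lborel (V - D)) (order_polytope (V - D) lt (S \<inter> {..b})) *
      emeasure (product_lborel D) (order_polytope D lt (S \<inter> {b<..})))"
  proof (intro sum.cong refl)
    fix D assume "D \<in> Ds"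
    then have "(V - D) \<union> D = V" "(V - D) \<inter> D = {}" "finite D"
      using fin by (auto simp: Ds_def intro: finite_subset)
    then show "emeasure (product_lborel V) (piece D) =
        emeasure (product_lborel (V - D)) (order_polytope (V - D) lt (S \<inter> {..b})) *
        emeasure (product_lborel D) (order_polytope D lt (S \<inter> {b<..}))"
      using emeasure_order_polytope_merge[of "V - D" D "S \<inter> {..b}" "S \<inter> {b<..}" lt] fin S
      by (simp add: piece_def)
  qed
  finally show ?thesis
    unfolding Ds_def .
qed

lemma order_volume_binomial:
  fixes h k :: real
  assumes fin: "finite V" and closed: "\<And>v w. lt w v \<Longrightarrow> v \<in> V \<Longrightarrow> w \<in> V"
    and h: "h \<ge> 0" and k: "k \<ge> 0"
  shows "(h + k) ^ card V * order_volume V lt =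
    (\<Sum>D\<in>{D. D \<subseteq> V \<and> downset lt D}.
      (h ^ card (V - D) * order_volume (V - D) lt) * (k ^ card D * order_volume D lt))"
proof -
  define Ds where "Ds = {D. D \<subseteq> V \<and> downset lt D}"
  have cut: "{0..h + k} \<inter> {..h} = {0..h}" "{0..h + k} \<inter> {h<..} = {h<..h + k}"
    using h k by auto
  have "ennreal ((h + k) ^ card V * order_volume V lt) =
      emeasure (product_lborel V) (order_polytope V lt {0..h + k})"
    using emeasure_order_polytope_Icc[OF fin, of "h + k" lt 0] h k by simp
  also have "\<dots> = (\<Sum>D\<in>Ds. emeasure (product_lborel (V - D)) (order_polytope (V - D) lt {0..h}) *
      emeasure (product_lborel D) (order_polytope D lt {h<..h + k}))"
    unfolding cut[symmetric] Ds_def using fin closed atLeastAtMost_borel by (rule emeasure_order_polytope_split)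
  also have "\<dots> = (\<Sum>D\<in>Ds. ennreal ((h ^ card (V - D) * order_volume (V - D) lt) *
      (k ^ card D * order_volume D lt)))"
  proof (intro sum.cong refl)
    fix D assume "D \<in> Ds"
    then have "finite D" "finite (V - D)"
      using fin by (auto simp: Ds_def intro: finite_subset)
    then show "emeasure (product_lborel (V - D)) (order_polytope (V - D) lt {0..h}) *
        emeasure (product_lborel D) (order_polytope D lt {h<..h + k}) =
        ennreal ((h ^ card (V - D) * order_volume (V - D) lt) * (k ^ card D * order_volume D lt))"
      using emeasure_order_polytope_Icc[of "V - D" h lt 0] emeasure_order_polytope_Icc[of D k lt h] h k
      by (simp add: emeasure_order_polytope_Ioc_eq_Icc ennreal_mult order_volume_nonneg)
  qed
  also have "\<dots> = ennreal (\<Sum>D\<in>Ds. (h ^ card (V - D) * order_volume (V - D) lt) *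
      (k ^ card D * order_volume D lt))"
    using h k by (intro sum_ennreal) (simp add: order_volume_nonneg)
  finally show ?thesis
    unfolding Ds_def using h k by (simp add: ennreal_inj order_volume_nonneg sum_nonneg)
qed

lemma order_volume_pos_of_rank:
  fixes g :: "'b \<Rightarrow> nat"
  assumes fin: "finite V" and bound: "\<And>v. v \<in> V \<Longrightarrow> g v < L"
    and rank: "\<And>v w. v \<in> V \<Longrightarrow> w \<in> V \<Longrightarrow> lt v w \<Longrightarrow> g w < g v"
  shows "order_volume V lt > 0"
proof -
  interpret product_sigma_finite "\<lambda>_. lborel :: real measure" by standard
  define box where "box = Pi\<^sub>E V (\<lambda>v. {real (g v) / L <..< real (g v + 1) / L})"
  have L_pos: "real L > 0" if "v \<in> V" for v
    using bound[OF that] by simp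
  have "box \<subseteq> order_polytope V lt {0..1}"
  proof
    fix f assume f: "f \<in> box"
    then have f_between: "real (g v) / L < f v \<and> f v < real (g v + 1) / L" if "v \<in> V" for v
      using that by (auto simp: box_def)
    have "f v \<in> {0..1}" if "v \<in> V" for v
    proof -
      have "0 \<le> real (g v) / L" "real (g v + 1) / L \<le> 1"
        using bound[OF that] L_pos[OF that] by (simp_all add: divide_le_eq_1)
      then show ?thesis
        using f_between[OF that] unfolding atLeastAtMost_iff by linarith
    qed
    moreover have "f w \<le> f v" if "v \<in> V" "w \<in> V" "lt v w" for v w
    proof -
      have "real (g w + 1) / L \<le> real (g v) / L"
        using rank[OF that] L_pos[OF that(1)] by (simp add: divide_right_mono)
      then show ?thesis
        using f_between[OF that(1)] f_between[OF that(2)] by linarith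
    qed
    ultimately show "f \<in> order_polytope V lt {0..1}"
      using f by (auto simp: order_polytope_def box_def PiE_def Pi_def)
  qed
  then have "emeasure (product_lborel V) box \<le> ennreal (order_volume V lt)"
    using fin by (metis emeasure_mono emeasure_order_polytope_unit sets_order_polytope atLeastAtMost_borel)
  moreover have "emeasure (product_lborel V) box = ennreal (1 / L) ^ card V"
  proof -
    have "emeasure lborel {real (g v) / L <..< real (g v + 1) / L} = ennreal (1 / L)" if "v \<in> V" for v
      using L_pos[OF that] by (simp add: divide_right_mono diff_divide_distrib[symmetric])
    then show ?thesis
      unfolding box_def using fin by (subst emeasure_PiM) simp_all
  qed
  moreover have "ennreal (1 / L) ^ card V > 0"
    using L_pos by (cases "V = {}") (auto simp: ennreal_zero_less_divide)
  ultimately show ?thesis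
    by (metis ennreal_less_zero_iff order_less_le_trans)
qed

text \<open>A strict partial order is ranked by the number of elements above each point.\<close>

lemma order_volume_pos:
  assumes fin: "finite V" and "irreflp_on V lt" and "transp_on V lt"
  shows "order_volume V lt > 0"
proof (rule order_volume_pos_of_rank[OF fin])
  define above where "above v = {u \<in> V. lt v u}" for v
  show "card (above v) < Suc (card V)" for v
    using fin by (simp add: above_def less_Suc_eq_le card_mono)
  fix v w assume "v \<in> V" "w \<in> V" "lt v w"
  have "above w \<subseteq> above v"
  proof
    fix u assume "u \<in> above w"
    then show "u \<in> above v"
      using transp_onD[OF assms(3) \<open>v \<in> V\<close> \<open>w \<in> V\<close>, of u] \<open>lt v w\<close> by (simp add: above_def)
  qed
  moreover have "w \<in> above v - above w"
    using \<open>w \<in> V\<close> \<open>lt v w\<close> irreflp_onD[OF assms(2)] by (auto simp: above_def)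
  ultimately have "above w \<subset> above v"
    by blast
  then show "card (above w) < card (above v)"
    using fin by (intro psubset_card_mono) (auto simp: above_def)
qed

lemma length_le_size_list: "length xs \<le> size_list f xs"
  by (induction xs) auto

lemma vtx_bounded:
  assumes "vtx ts p"
  shows "set p \<subseteq> {..<size_list size ts} \<and> length p \<le> size_list size ts"
  using assms
proof (induction rule: vtx.induct)
  case (root i ts)
  then show ?case
    using length_le_size_list[of ts size] by auto
next
  case (sub i ts a cs p)
  have "size (ts ! i) \<le> size_list size ts"
    using sub(1) by (intro size_list_estimation'[OF nth_mem]) auto
  moreover have "size (ts ! i) = size_list size cs + 1"
    using sub(2) by simp
  ultimately show ?case
    using sub length_le_size_list[of ts size] by auto
qed

lemma finite_verts: "finite (verts ts)"
proof (rule finite_subset)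
  show "verts ts \<subseteq> {p. set p \<subseteq> {..<size_list size ts} \<and> length p \<le> size_list size ts}"
    using vtx_bounded by (auto simp: verts_def)
qed (rule finite_lists_length_le, simp)

lemma planar_lt_verts:
  assumes "planar_lt ts v w"
  shows "v \<in> verts ts" "w \<in> verts ts"
  using assms unfolding planar_lt_def
  by (induction rule: tranclp.induct) (auto simp: relR_def)

lemma planar_lt_depth_or_left:
  assumes "planar_lt ts v w"
  shows "length v < length w \<or> length v = length w \<and> last w < last v"
  using assms unfolding planar_lt_def
proof (induction rule: tranclp.induct)
  case (r_into_trancl v w)
  then show ?case
    by (auto simp: relR_def anc_def)
next
  case (trancl_into_trancl u v w)
  from \<open>relR ts v w\<close> have "length v < length w \<or> length v = length w \<and> last w < last v"
    by (auto simp: relR_def anc_def)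
  with trancl_into_trancl.IH show ?case
    by auto
qed

lemma irreflp_on_planar_lt: "irreflp_on A (planar_lt ts)"
  using planar_lt_depth_or_left by (auto simp: irreflp_on_def)

lemma transp_on_planar_lt: "transp_on A (planar_lt ts)"
  by (auto simp: transp_on_def planar_lt_def)

lemma poset_fact_ratio_eq:
  "poset_fact V lt / (poset_fact (V - D) lt * poset_fact D lt) =
    order_volume (V - D) lt * order_volume D lt / order_volume V lt"
  by (simp add: poset_fact_eq_inverse_order_volume)

theorem mainTheorem8:
  fixes \<tau> :: "'a ptree list" and h k :: real
  assumes "h \<ge> 0" and "k \<ge> 0"
  shows "(h + k) ^ card (verts \<tau>) =
    (\<Sum>D\<in>{D. D \<subseteq> verts \<tau> \<and> downset (planar_lt \<tau>) D}.
       poset_fact (verts \<tau>) (planar_lt \<tau>) /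
         (poset_fact (verts \<tau> - D) (planar_lt \<tau>) * poset_fact D (planar_lt \<tau>))
       * h ^ card (verts \<tau> - D) * k ^ card D)"
proof -
  let ?V = "verts \<tau>" and ?lt = "planar_lt \<tau>"
  have closed: "w \<in> ?V" if "?lt w v" for v w
    using planar_lt_verts[OF that] by simp
  have pos: "order_volume ?V ?lt > 0"
    using finite_verts irreflp_on_planar_lt transp_on_planar_lt by (rule order_volume_pos)
  have binomial: "(h + k) ^ card ?V * order_volume ?V ?lt =
      (\<Sum>D\<in>{D. D \<subseteq> ?V \<and> downset ?lt D}.
        (h ^ card (?V - D) * order_volume (?V - D) ?lt) * (k ^ card D * order_volume D ?lt))"
    using finite_verts closed assms by (rule order_volume_binomial)
  have summand: "poset_fact ?V ?lt / (poset_fact (?V - D) ?lt * poset_fact D ?lt) * h ^ card (?V - D) * k ^ card D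
      = (h ^ card (?V - D) * order_volume (?V - D) ?lt) * (k ^ card D * order_volume D ?lt) / order_volume ?V ?lt"
    for D
    unfolding poset_fact_ratio_eq by (simp add: mult_ac)
  show ?thesis
    unfolding summand sum_divide_distrib[symmetric] binomial[symmetric] using pos by simp
qed

end
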